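(* Let $X$ and $Y$ be separable real Banach spaces with $Y$ finite-dimensional, and assume that the projective tensor product $X\widehat{\otimes}_\pi Y$ has an octahedral norm. Then there exist $u\in S_{X^{**}}$ such that $\Vert x+u\Vert=1+\Vert x\Vert$ for every $x\in X$, and $y\in S_Y$ such that $\Vert z+u\otimes y\Vert=1+\Vert z\Vert$ for every $z\in X\widehat{\otimes}_\pi Y$ (norm computed in $(X\widehat{\otimes}_\pi Y)^{**}$).
   Context: All Banach spaces are real. $(X\widehat{\otimes}_\pi Y)^*$ is identified with $L(X,Y^* )$ via $T(x\otimes y)=T(x)(y)$. For $u\in X^{**}$ and $y\in Y$, $u\otimes y$ denotes the element of $(X\widehat{\otimes}_\pi Y)^{**}=L(X,Y^* )^*$ given by $T\mapsto u(y\circ T)$, where $(y\circ T)\in X^*$ is $x\mapsto T(x)(y)$. A Banach space $X$ has an octahedral norm if for every finite-dimensional subspace $F$ of $X$ and every $\varepsilon>0$ there exists $x\in S_X$ such that $\Vert f+\lambda x\Vert\ge(1-\varepsilon)(\Vert f\Vert+|\lambda|)$ for all $f\in F$, $\lambda\in\mathbb R$. *)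

theory Defs
  imports "HOL-Analysis.Analysis"
begin

(* The dual of the projective tensor product is identified with L(X,Y^* ) = ('a \<Rightarrow>\<^sub>L ('b \<Rightarrow>\<^sub>L real)),
  and its bidual with L(X,Y^* )* .  The projective tensor product itself is realised as the
  closed linear span of the elementary tensors inside its bidual (canonical isometric embedding).*)

type_synonym ('a,'b) ptensor_bidual = "('a \<Rightarrow>\<^sub>L ('b \<Rightarrow>\<^sub>L real)) \<Rightarrow>\<^sub>L real"

definition bidual_emb :: "'a::real_normed_vector \<Rightarrow> (('a \<Rightarrow>\<^sub>L real) \<Rightarrow>\<^sub>L real)" where
  "bidual_emb x = Blinfun (\<lambda>f. blinfun_apply f x)"

definition ptensor :: "'a::real_normed_vector \<Rightarrow> 'b::real_normed_vector \<Rightarrow> ('a,'b) ptensor_bidual" where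
  "ptensor x y = Blinfun (\<lambda>T. blinfun_apply (blinfun_apply T x) y)"

(* u \<otimes> y for u in X^**, as the functional T \<mapsto> u(y \<circ> T), (y \<circ> T)(x) = T(x)(y)*)
definition bidual_tensor :: "(('a::real_normed_vector \<Rightarrow>\<^sub>L real) \<Rightarrow>\<^sub>L real) \<Rightarrow> 'b::real_normed_vector \<Rightarrow> ('a,'b) ptensor_bidual" where
  "bidual_tensor u y = Blinfun (\<lambda>T. blinfun_apply u (Blinfun (\<lambda>x. blinfun_apply (blinfun_apply T x) y)))"

definition ptensor_space :: "('a::real_normed_vector,'b::real_normed_vector) ptensor_bidual set" where
  "ptensor_space = closure (span {ptensor x y | x y. True})"

(* Octahedral norm on a (closed) subspace E of a normed space: for every finite-dimensional
  subspace F of E (= span of a finite subset of E) and every \<epsilon> > 0 there is x in the unit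
  sphere of E with \<parallel>f + \<lambda>x\<parallel> \<ge> (1-\<epsilon>)(\<parallel>f\<parallel> + |\<lambda>|).*)
definition octahedral_on :: "'v::real_normed_vector set \<Rightarrow> bool" where
  "octahedral_on E \<longleftrightarrow>
    (\<forall>A \<epsilon>. finite A \<and> A \<subseteq> E \<and> \<epsilon> > 0 \<longrightarrow>
      (\<exists>x\<in>E. norm x = 1 \<and>
         (\<forall>f\<in>span A. \<forall>t::real. norm (f + t *\<^sub>R x) \<ge> (1 - \<epsilon>) * (norm f + \<bar>t\<bar>))))"

end

(* Octahedrality of the projective tensor product can be witnessed by elementary tensors
   a \<otimes> b with norm a, norm b \<le> 1.  Choosing such tensors one after the other, against a
   dense sequence and with errors 2^-(m+1), gives a sequence w m = a m \<otimes> b m whose tails are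
   almost isometric to the l1 basis over everything chosen before.  As Y is finite-dimensional, a
   subsequence of (b m) converges to some y, and u is taken to be a weak* cluster point in X** of the
   corresponding subsequence of (a m).  For every z, the l1 behaviour of the tails yields a norm-one
   T with T(z) close to norm z and T(a m)(b m) close to 1 for all large m, so (z + u \<otimes> y)(T) is
   close to norm z + 1.  All functionals are produced by the Mazur-Orlicz form of the Hahn-Banach
   theorem.  The statement in X** follows by comparing u \<otimes> y + x \<otimes> y with x + u. *)

theory Submission
  imports Defs
begin

section \<open>Hahn-Banach for sublinear functionals\<close>

definition sublinear :: "('v::real_vector \<Rightarrow> real) \<Rightarrow> bool" where
  "sublinear p \<longleftrightarrow> (\<forall>x y. p (x + y) \<le> p x + p y) \<and> (\<forall>c x. 0 < c \<longrightarrow> p (c *\<^sub>R x) = c * p x)"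

lemma sublinear_norm: "sublinear norm"
  by (simp add: sublinear_def norm_triangle_ineq)

lemma sublinear_add: "sublinear p \<Longrightarrow> p (x + y) \<le> p x + p y"
  unfolding sublinear_def by blast

lemma sublinear_scale: "sublinear p \<Longrightarrow> 0 < c \<Longrightarrow> p (c *\<^sub>R x) = c * p x"
  unfolding sublinear_def by blast

lemma sublinear_0: "sublinear p \<Longrightarrow> p 0 = 0"
  using sublinear_scale[of p 2 0] by simp

definition dominated_linear_graph :: "('v::real_vector \<Rightarrow> real) \<Rightarrow> ('v \<times> real) set \<Rightarrow> bool" where
  "dominated_linear_graph p G \<longleftrightarrow>
     subspace G \<and> (\<forall>x a b. (x, a) \<in> G \<longrightarrow> (x, b) \<in> G \<longrightarrow> a = b) \<and> (\<forall>x a. (x, a) \<in> G \<longrightarrow> a \<le> p x)"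

lemma dominated_linear_graph_Union_chain:
  assumes "C \<noteq> {}" and chain: "subset.chain {G. dominated_linear_graph p G} C"
  shows "dominated_linear_graph p (\<Union>C)"
proof -
  have graphs: "\<And>G. G \<in> C \<Longrightarrow> dominated_linear_graph p G"
    and comparable: "\<And>G H. G \<in> C \<Longrightarrow> H \<in> C \<Longrightarrow> G \<subseteq> H \<or> H \<subseteq> G"
    using chain unfolding subset.chain_def by auto
  have "subspace (\<Union>C)"
    unfolding subspace_def
  proof (intro conjI ballI allI)
    show "0 \<in> \<Union>C"
      using \<open>C \<noteq> {}\<close> graphs subspace_0 unfolding dominated_linear_graph_def by blast
    fix x y assume "x \<in> \<Union>C" "y \<in> \<Union>C"
    then obtain G H where "x \<in> G" "G \<in> C" "y \<in> H" "H \<in> C" by auto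
    then show "x + y \<in> \<Union>C"
      using comparable[of G H] graphs subspace_add unfolding dominated_linear_graph_def by blast
  next
    fix c x assume "x \<in> \<Union>C"
    then show "c *\<^sub>R x \<in> \<Union>C"
      using graphs subspace_scale unfolding dominated_linear_graph_def by blast
  qed
  moreover have "a = b" if "(x, a) \<in> \<Union>C" "(x, b) \<in> \<Union>C" for x a b
  proof -
    from that obtain G H where "(x, a) \<in> G" "G \<in> C" "(x, b) \<in> H" "H \<in> C"
      by (elim UnionE)
    with comparable[of G H] graphs show ?thesis
      unfolding dominated_linear_graph_def by blast
  qed
  moreover have "a \<le> p x" if "(x, a) \<in> \<Union>C" for x a
    using that graphs unfolding dominated_linear_graph_def by blast
  ultimately show ?thesis
    unfolding dominated_linear_graph_def by blast
qed

lemma dominated_linear_graph_extension_constant: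
  assumes p: "sublinear p" and M: "dominated_linear_graph p M"
  shows "\<exists>c. \<forall>y a. (y, a) \<in> M \<longrightarrow> a - p (y - x0) \<le> c \<and> c \<le> p (y + x0) - a"
proof -
  define S where "S = {a - p (y - x0) | y a. (y, a) \<in> M}"
  have M_add: "(y + y', a + a') \<in> M" if "(y, a) \<in> M" "(y', a') \<in> M" for y a y' a'
    using M subspace_add[OF _ that] unfolding dominated_linear_graph_def by fastforce
  have M_le: "a \<le> p y" if "(y, a) \<in> M" for y a
    using M that unfolding dominated_linear_graph_def by blast
  have key: "a' - p (y' - x0) \<le> p (y + x0) - a" if "(y, a) \<in> M" "(y', a') \<in> M" for y a y' a'
  proof -
    have "a + a' \<le> p ((y' - x0) + (y + x0))"
      using M_le[OF M_add[OF that]] by (simp add: add.commute)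
    also have "\<dots> \<le> p (y' - x0) + p (y + x0)"
      by (rule sublinear_add[OF p])
    finally show ?thesis by simp
  qed
  have "(0, 0) \<in> M"
    using M subspace_0 unfolding dominated_linear_graph_def by (fastforce simp: zero_prod_def)
  then have "S \<noteq> {}" and "bdd_above S"
    using key unfolding S_def bdd_above_def by blast+
  have "a - p (y - x0) \<le> Sup S \<and> Sup S \<le> p (y + x0) - a" if "(y, a) \<in> M" for y a
  proof
    show "a - p (y - x0) \<le> Sup S"
      using that \<open>bdd_above S\<close> unfolding S_def by (blast intro: cSup_upper)
    show "Sup S \<le> p (y + x0) - a"
      using that \<open>S \<noteq> {}\<close> key unfolding S_def by (blast intro: cSup_least)
  qed
  then show ?thesis by blast
qed

lemma dominated_linear_graph_extension_le:
  assumes p: "sublinear p" and M: "dominated_linear_graph p M"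
    and c: "\<And>y a. (y, a) \<in> M \<Longrightarrow> a - p (y - x0) \<le> c \<and> c \<le> p (y + x0) - a"
    and ya: "(y, a) \<in> M"
  shows "a + t * c \<le> p (y + t *\<^sub>R x0)"
proof -
  have scaled: "(r *\<^sub>R y, r * a) \<in> M" for r
    using M subspace_scale[OF _ ya, of r] unfolding dominated_linear_graph_def by simp
  consider "t = 0" | "t > 0" | "t < 0" by linarith
  then show ?thesis
  proof cases
    case 1
    then show ?thesis using M ya unfolding dominated_linear_graph_def by simp
  next
    case 2
    have "c \<le> p ((1 / t) *\<^sub>R y + x0) - (1 / t) * a"
      using c[OF scaled] by blast
    moreover have "p (y + t *\<^sub>R x0) = t * p ((1 / t) *\<^sub>R y + x0)"
      using sublinear_scale[OF p 2, of "(1 / t) *\<^sub>R y + x0"] 2 by (simp add: scaleR_add_right)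
    ultimately show ?thesis using 2 by (simp add: field_simps)
  next
    case 3
    have "(- 1 / t) * a - p ((- 1 / t) *\<^sub>R y - x0) \<le> c"
      using c[OF scaled] by blast
    moreover have "p (y + t *\<^sub>R x0) = - t * p ((- 1 / t) *\<^sub>R y - x0)"
      using sublinear_scale[OF p, of "- t" "(- 1 / t) *\<^sub>R y - x0"] 3
      by (simp add: scaleR_diff_right)
    ultimately show ?thesis using 3 by (simp add: field_simps)
  qed
qed

lemma dominated_linear_graph_extend:
  assumes p: "sublinear p" and M: "dominated_linear_graph p M" and x0: "\<nexists>a. (x0, a) \<in> M"
  shows "\<exists>M'. dominated_linear_graph p M' \<and> M \<subseteq> M' \<and> M' \<noteq> M"
proof -
  obtain c where c: "\<And>y a. (y, a) \<in> M \<Longrightarrow> a - p (y - x0) \<le> c \<and> c \<le> p (y + x0) - a"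
    using dominated_linear_graph_extension_constant[OF p M] by blast
  have subM: "subspace M" and funM: "\<And>x a b. (x, a) \<in> M \<Longrightarrow> (x, b) \<in> M \<Longrightarrow> a = b"
    using M unfolding dominated_linear_graph_def by blast+
  define M' where "M' = (\<lambda>((y, a), t). (y + t *\<^sub>R x0, a + t * c)) ` (M \<times> UNIV)"
  have "linear (\<lambda>((y, a), t). (y + t *\<^sub>R x0, a + t * c))"
    by (intro linearI) (auto simp: case_prod_beta algebra_simps scaleR_add_left)
  then have "subspace M'"
    unfolding M'_def by (intro linear_subspace_image subspace_Times subM subspace_UNIV)
  moreover have "a = b" if mem: "(x, a) \<in> M'" "(x, b) \<in> M'" for x a b
  proof -
    obtain y1 a1 t1 y2 a2 t2 where m: "(y1, a1) \<in> M" "(y2, a2) \<in> M"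
      "x = y1 + t1 *\<^sub>R x0" "a = a1 + t1 * c" "x = y2 + t2 *\<^sub>R x0" "b = a2 + t2 * c"
      using mem unfolding M'_def by fast
    have diff: "(y2 - y1, a2 - a1) \<in> M"
      using subspace_diff[OF subM m(2,1)] by simp
    have "t1 = t2"
    proof (rule ccontr)
      assume "t1 \<noteq> t2"
      have "(t1 - t2) *\<^sub>R x0 = y2 - y1"
        using m(3,5) by (simp add: algebra_simps)
      then have "x0 = (1 / (t1 - t2)) *\<^sub>R (y2 - y1)"
        using \<open>t1 \<noteq> t2\<close> by (metis divide_self_if eq_vector_fraction_iff right_minus_eq)
      then show False
        using subspace_scale[OF subM diff, of "1 / (t1 - t2)"] x0 by auto
    qed
    then show "a = b" using m funM by simp
  qed
  moreover have "a \<le> p x" if mem: "(x, a) \<in> M'" for x a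
    using mem dominated_linear_graph_extension_le[OF p M c] unfolding M'_def by fast
  ultimately have "dominated_linear_graph p M'"
    unfolding dominated_linear_graph_def by blast
  moreover have "M \<subseteq> M'"
    unfolding M'_def by (auto intro!: image_eqI[where x = "(_, 0)"])
  moreover have "(x0, c) \<in> M'"
    using subspace_0[OF subM] unfolding M'_def zero_prod_def
    by (auto intro!: image_eqI[where x = "((0, 0), 1)"])
  ultimately show ?thesis using x0 by blast
qed

theorem sublinear_dominated_linear_exists:
  assumes p: "sublinear p"
  shows "\<exists>F. linear F \<and> (\<forall>x. F x \<le> p x)"
proof -
  have "{(0, 0)} \<in> {G. dominated_linear_graph p G}"
    using subspace_single_0[where ?'a = "'a \<times> real"] sublinear_0[OF p]
    by (simp add: dominated_linear_graph_def zero_prod_def)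
  then obtain M where M: "dominated_linear_graph p M"
    and maximal: "\<And>G. dominated_linear_graph p G \<Longrightarrow> M \<subseteq> G \<Longrightarrow> G = M"
    using subset_Zorn_nonempty[of "{G. dominated_linear_graph p G}"]
      dominated_linear_graph_Union_chain
    by (metis (no_types, lifting) empty_iff mem_Collect_eq)
  have subM: "subspace M" and funM: "\<And>x a b. (x, a) \<in> M \<Longrightarrow> (x, b) \<in> M \<Longrightarrow> a = b"
    using M unfolding dominated_linear_graph_def by blast+
  have total: "\<exists>a. (x, a) \<in> M" for x
    using dominated_linear_graph_extend[OF p M] maximal by blast
  define F where "F x = (THE a. (x, a) \<in> M)" for x
  have graph_F: "(x, F x) \<in> M" for x
    unfolding F_def using total[of x] funM by (metis theI)
  have "linear F"
  proof (rule linearI)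
    fix x y
    show "F (x + y) = F x + F y"
      using funM[OF graph_F] subspace_add[OF subM graph_F graph_F] by simp
  next
    fix r x
    show "F (r *\<^sub>R x) = r *\<^sub>R F x"
      using funM[OF graph_F] subspace_scale[OF subM graph_F, of r] by simp
  qed
  moreover have "F x \<le> p x" for x
    using M graph_F unfolding dominated_linear_graph_def by blast
  ultimately show ?thesis by blast
qed

section \<open>The Mazur-Orlicz theorem\<close>

lemma convex_cone_hull_sum_representation:
  assumes "x \<in> convex_cone hull P"
  obtains S u where "finite S" "S \<subseteq> P" "\<forall>q\<in>S. 0 \<le> u q" "x = (\<Sum>q\<in>S. u q *\<^sub>R q)"
proof (cases "P = {}")
  case True
  then show ?thesis using assms that[of "{}"] by simp
next
  case False
  then have "x \<in> (\<Union>y \<in> convex hull P. \<Union>c\<in>{0..}. {c *\<^sub>R y})"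
    using assms convex_cone_hull_convex_hull_nonempty by blast
  then obtain y c where "y \<in> convex hull P" "0 \<le> c" "x = c *\<^sub>R y"
    by blast
  moreover obtain S u where "finite S" "S \<subseteq> P" "\<forall>q\<in>S. 0 \<le> u q" "y = (\<Sum>q\<in>S. u q *\<^sub>R q)"
    using \<open>y \<in> convex hull P\<close> unfolding convex_hull_explicit by blast
  ultimately show ?thesis
    using that[of S "\<lambda>q. c * u q"] by (simp add: scaleR_sum_right)
qed

text \<open>A linear \<open>F \<le> cone_infimum p K\<close> satisfies \<open>F \<le> p\<close> and \<open>r \<le> F s\<close> for \<open>(s, r) \<in> K\<close>
  (evaluate at \<open>0\<close> and at \<open>- s\<close>).\<close>

definition cone_infimum :: "('v::real_vector \<Rightarrow> real) \<Rightarrow> ('v \<times> real) set \<Rightarrow> 'v \<Rightarrow> real" where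
  "cone_infimum p K w = Inf {p (w + s) - r | s r. (s, r) \<in> K}"

lemma cone_infimum_le:
  assumes p: "sublinear p" and K_le: "\<And>s r. (s, r) \<in> K \<Longrightarrow> r \<le> p s" and "(s, r) \<in> K"
  shows "cone_infimum p K w \<le> p (w + s) - r"
  unfolding cone_infimum_def
proof (rule cInf_lower)
  show "p (w + s) - r \<in> {p (w + s) - r | s r. (s, r) \<in> K}"
    using \<open>(s, r) \<in> K\<close> by blast
  have "- p (- w) \<le> p (w + s') - r'" if "(s', r') \<in> K" for s' r'
    using K_le[OF that] sublinear_add[OF p, of "w + s'" "- w"] by simp
  then show "bdd_below {p (w + s) - r | s r. (s, r) \<in> K}"
    unfolding bdd_below_def by blast
qed

lemma cone_infimum_greatest:
  assumes "K \<noteq> {}" and "\<And>s r. (s, r) \<in> K \<Longrightarrow> z \<le> p (w + s) - r"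
  shows "z \<le> cone_infimum p K w"
  unfolding cone_infimum_def using assms by (intro cInf_greatest) auto

lemma sublinear_cone_infimum:
  assumes p: "sublinear p" and K: "convex_cone K" and K_le: "\<And>s r. (s, r) \<in> K \<Longrightarrow> r \<le> p s"
  shows "sublinear (cone_infimum p K)"
proof -
  let ?q = "cone_infimum p K"
  have K_ne: "K \<noteq> {}"
    using convex_cone_nonempty[OF K] .
  have K_add: "(s1 + s2, r1 + r2) \<in> K" if "(s1, r1) \<in> K" "(s2, r2) \<in> K" for s1 r1 s2 r2
    using convex_cone_add[OF K that] by simp
  have K_scale: "(c *\<^sub>R s, c * r) \<in> K" if "(s, r) \<in> K" "0 \<le> c" for s r c
    using convex_cone_scaleR[OF K that(2,1)] by simp
  have q_le: "cone_infimum p K w \<le> p (w + s) - r" if "(s, r) \<in> K" for w s r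
    using p K_le that by (rule cone_infimum_le)
  have q_add: "?q (x + y) \<le> ?q x + ?q y" for x y
  proof -
    have "?q (x + y) - (p (y + s2) - r2) \<le> ?q x" if s2: "(s2, r2) \<in> K" for s2 r2
    proof (rule cone_infimum_greatest[OF K_ne])
      fix s1 r1 assume s1: "(s1, r1) \<in> K"
      have "?q (x + y) \<le> p (x + y + (s1 + s2)) - (r1 + r2)"
        using q_le[OF K_add[OF s1 s2]] .
      also have "p (x + y + (s1 + s2)) \<le> p (x + s1) + p (y + s2)"
        using sublinear_add[OF p, of "x + s1" "y + s2"] by (simp add: algebra_simps)
      finally show "?q (x + y) - (p (y + s2) - r2) \<le> p (x + s1) - r1" by simp
    qed
    then have "?q (x + y) - ?q x \<le> ?q y"
      by (intro cone_infimum_greatest[OF K_ne]) (simp add: algebra_simps)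
    then show ?thesis by simp
  qed
  have q_scale_le: "?q (c *\<^sub>R x) \<le> c * ?q x" if c: "c > 0" for c x
  proof -
    have "?q (c *\<^sub>R x) / c \<le> ?q x"
    proof (rule cone_infimum_greatest[OF K_ne])
      fix s r assume sr: "(s, r) \<in> K"
      have "?q (c *\<^sub>R x) \<le> p (c *\<^sub>R x + c *\<^sub>R s) - c * r"
        using q_le[OF K_scale[OF sr], of c] c by simp
      also have "p (c *\<^sub>R x + c *\<^sub>R s) = c * p (x + s)"
        using sublinear_scale[OF p c, of "x + s"] by (simp add: scaleR_add_right)
      finally show "?q (c *\<^sub>R x) / c \<le> p (x + s) - r"
        using c by (simp add: field_simps)
    qed
    then show ?thesis using c by (simp add: field_simps)
  qed
  show ?thesis
    unfolding sublinear_def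
  proof (intro conjI allI impI q_add antisym)
    fix c :: real and x assume c: "0 < c"
    show "?q (c *\<^sub>R x) \<le> c * ?q x" using q_scale_le[OF c] .
    have "?q x \<le> (1 / c) * ?q (c *\<^sub>R x)"
      using q_scale_le[of "1 / c" "c *\<^sub>R x"] c by simp
    then show "c * ?q x \<le> ?q (c *\<^sub>R x)"
      using c by (simp add: field_simps)
  qed
qed

theorem mazur_orlicz:
  fixes P :: "('v::real_vector \<times> real) set"
  assumes p: "sublinear p"
    and combinations: "\<And>S u. finite S \<Longrightarrow> S \<subseteq> P \<Longrightarrow> \<forall>q\<in>S. 0 \<le> u q \<Longrightarrow>
                 (\<Sum>q\<in>S. u q * snd q) \<le> p (\<Sum>q\<in>S. u q *\<^sub>R fst q)"
  shows "\<exists>F. linear F \<and> (\<forall>x. F x \<le> p x) \<and> (\<forall>(v, c)\<in>P. c \<le> F v)"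
proof -
  define K where "K = convex_cone hull P"
  have K: "convex_cone K"
    unfolding K_def by (rule convex_cone_convex_cone_hull)
  have K_le: "r \<le> p s" if "(s, r) \<in> K" for s r
  proof -
    obtain S u where "finite S" "S \<subseteq> P" "\<forall>q\<in>S. 0 \<le> u q" "(s, r) = (\<Sum>q\<in>S. u q *\<^sub>R q)"
      using \<open>(s, r) \<in> K\<close> unfolding K_def by (rule convex_cone_hull_sum_representation)
    then show ?thesis
      using combinations[of S u] by (simp add: prod_eq_iff fst_sum snd_sum)
  qed
  have q_le: "cone_infimum p K w \<le> p (w + s) - r" if "(s, r) \<in> K" for w s r
    using p K_le that by (rule cone_infimum_le)
  obtain F where F: "linear F" "\<And>x. F x \<le> cone_infimum p K x"
    using sublinear_dominated_linear_exists[OF sublinear_cone_infimum[OF p K K_le]] by blast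
  have K_0: "(0, 0) \<in> K"
    using convex_cone_contains_0[OF K] by (simp add: zero_prod_def)
  have "F x \<le> p x" for x
    using order_trans[OF F(2) q_le[OF K_0]] by simp
  moreover have "c \<le> F v" if "(v, c) \<in> P" for v c
  proof -
    have "(v, c) \<in> K"
      unfolding K_def using that by (rule hull_inc)
    then have "- F v \<le> p (- v + v) - c"
      using order_trans[OF F(2) q_le] linear_neg[OF F(1)] by metis
    then show ?thesis using sublinear_0[OF p] by simp
  qed
  ultimately show ?thesis using F(1) by (intro exI[of _ F]) auto
qed

corollary mazur_orlicz_norm:
  fixes P :: "('v::real_normed_vector \<times> real) set"
  assumes "\<And>S u. finite S \<Longrightarrow> S \<subseteq> P \<Longrightarrow> \<forall>q\<in>S. 0 \<le> u q \<Longrightarrow>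
             (\<Sum>q\<in>S. u q * snd q) \<le> norm (\<Sum>q\<in>S. u q *\<^sub>R fst q)"
  shows "\<exists>F :: 'v \<Rightarrow>\<^sub>L real. norm F \<le> 1 \<and> (\<forall>(v, c)\<in>P. c \<le> blinfun_apply F v)"
proof -
  obtain F :: "'v \<Rightarrow> real" where F: "linear F" "\<And>x. F x \<le> norm x" "\<forall>(v, c)\<in>P. c \<le> F v"
    using mazur_orlicz[OF sublinear_norm assms] by blast
  have abs_F: "\<bar>F x\<bar> \<le> norm x" for x
    using F(2)[of x] F(2)[of "- x"] linear_neg[OF F(1), of x] by simp
  have "bounded_linear F"
    using F(1) abs_F
    by (intro bounded_linear_intro[where K = 1]) (auto simp: linear_add linear_scale)
  then have apply_F: "blinfun_apply (Blinfun F) = F"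
    by (rule bounded_linear_Blinfun_apply)
  have "norm (Blinfun F) \<le> 1"
    by (rule norm_blinfun_bound) (use abs_F apply_F in auto)
  then show ?thesis
    using F(3) apply_F by (intro exI[of _ "Blinfun F"]) auto
qed

lemma exists_norming_functional:
  fixes x :: "'v::real_normed_vector"
  shows "\<exists>g :: 'v \<Rightarrow>\<^sub>L real. norm g \<le> 1 \<and> blinfun_apply g x = norm x"
proof -
  have "(\<Sum>q\<in>S. u q * snd q) \<le> norm (\<Sum>q\<in>S. u q *\<^sub>R fst q)"
    if sub: "S \<subseteq> {(x, norm x)}" and nonneg: "\<forall>q\<in>S. 0 \<le> u q" for S u
  proof -
    consider "S = {}" | "S = {(x, norm x)}"
      using subset_singletonD[OF sub] by blast
    then show ?thesis
      using nonneg by cases simp_all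
  qed
  then obtain g :: "'v \<Rightarrow>\<^sub>L real" where g: "norm g \<le> 1" "norm x \<le> blinfun_apply g x"
    using mazur_orlicz_norm[of "{(x, norm x)}"] by auto
  have "blinfun_apply g x \<le> norm x"
    using norm_blinfun[of g x] g(1) mult_right_mono[OF g(1) norm_ge_zero[of x]] by simp
  then show ?thesis using g by (intro exI[of _ g]) auto
qed

text \<open>\<open>u\<close> is a weak* cluster point of the sequence \<open>x\<close> in the bidual.\<close>

lemma exists_functional_above_eventual_bounds:
  fixes x :: "nat \<Rightarrow> 'v::real_normed_vector"
  assumes x: "\<And>k. norm (x k) \<le> 1"
  obtains u :: "('v \<Rightarrow>\<^sub>L real) \<Rightarrow>\<^sub>L real" where "norm u \<le> 1"
    "\<And>g c. eventually (\<lambda>k. c \<le> blinfun_apply g (x k)) sequentially \<Longrightarrow> c \<le> blinfun_apply u g"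
proof -
  define P where
    "P = {(g :: 'v \<Rightarrow>\<^sub>L real, c). eventually (\<lambda>k. c \<le> blinfun_apply g (x k)) sequentially}"
  have "(\<Sum>q\<in>S. u q * snd q) \<le> norm (\<Sum>q\<in>S. u q *\<^sub>R fst q)"
    if S: "finite S" "S \<subseteq> P" and u: "\<forall>q\<in>S. 0 \<le> u q" for S u
  proof -
    have "eventually (\<lambda>k. \<forall>q\<in>S. snd q \<le> blinfun_apply (fst q) (x k)) sequentially"
      using S unfolding P_def by (intro eventually_ball_finite) auto
    then obtain k where k: "\<forall>q\<in>S. snd q \<le> blinfun_apply (fst q) (x k)"
      unfolding eventually_sequentially by blast
    have "(\<Sum>q\<in>S. u q * snd q) \<le> (\<Sum>q\<in>S. u q * blinfun_apply (fst q) (x k))"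
      using k u by (intro sum_mono mult_left_mono) auto
    also have "\<dots> = blinfun_apply (\<Sum>q\<in>S. u q *\<^sub>R fst q) (x k)"
      by (simp add: blinfun.sum_left blinfun.scaleR_left)
    also have "\<dots> \<le> norm (\<Sum>q\<in>S. u q *\<^sub>R fst q) * norm (x k)"
      using norm_blinfun[of "\<Sum>q\<in>S. u q *\<^sub>R fst q" "x k"] by simp
    also have "\<dots> \<le> norm (\<Sum>q\<in>S. u q *\<^sub>R fst q)"
      using x[of k] by (simp add: mult_left_le)
    finally show ?thesis .
  qed
  then obtain u :: "('v \<Rightarrow>\<^sub>L real) \<Rightarrow>\<^sub>L real" where "norm u \<le> 1" "\<forall>(g, c)\<in>P. c \<le> blinfun_apply u g"
    using mazur_orlicz_norm[of P] by blast
  then show thesis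
    using that[of u] unfolding P_def by auto
qed

section \<open>Normed spaces\<close>

lemma subspace_closure:
  fixes S :: "'v::real_normed_vector set"
  assumes S: "subspace S"
  shows "subspace (closure S)"
proof -
  have "(\<lambda>(x, y). x + y) ` (S \<times> S) \<subseteq> closure S"
    using subspace_add[OF S] closure_subset by fastforce
  then have "(\<lambda>(x, y). x + y) ` closure (S \<times> S) \<subseteq> closure S"
    by (intro image_closure_subset) (auto intro!: continuous_intros simp: case_prod_unfold)
  moreover have "(\<lambda>x. c *\<^sub>R x) ` S \<subseteq> closure S" for c
    using subspace_scale[OF S] closure_subset by fastforce
  then have "(\<lambda>x. c *\<^sub>R x) ` closure S \<subseteq> closure S" for c
    by (intro image_closure_subset) (auto intro!: continuous_intros)
  ultimately show ?thesis
    using subspace_0[OF S] closure_subset unfolding subspace_def closure_Times by blast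
qed

lemma closed_if_compact_Int_cball:
  fixes S :: "'v::real_normed_vector set"
  assumes "\<And>R. compact (S \<inter> cball 0 R)"
  shows "closed S"
proof -
  have "x \<in> S" if "x \<in> closure S" for x
  proof -
    have "x \<in> ball 0 (norm x + 1) \<inter> closure S" using that by simp
    also have "\<dots> \<subseteq> closure (ball 0 (norm x + 1) \<inter> S)"
      by (simp add: open_Int_closure_subset)
    also have "\<dots> \<subseteq> closure (S \<inter> cball 0 (norm x + 1))"
      by (intro closure_mono) auto
    also have "\<dots> = S \<inter> cball 0 (norm x + 1)"
      using assms compact_imp_closed closure_closed by blast
    finally show ?thesis by simp
  qed
  then show ?thesis using closure_subset_eq by blast
qed

lemma span_insert_coefficient_bound:
  fixes a :: "'v::real_normed_vector"
  assumes "closed (span A)" and "a \<notin> span A"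
  obtains d where "d > 0" "\<And>x c. x \<in> span A \<Longrightarrow> \<bar>c\<bar> * d \<le> norm (x + c *\<^sub>R a)"
proof
  show "infdist a (span A) > 0"
    using assms in_closed_iff_infdist_zero[of "span A" a] infdist_nonneg[of a "span A"] span_0
    by fastforce
  fix x c assume x: "x \<in> span A"
  show "\<bar>c\<bar> * infdist a (span A) \<le> norm (x + c *\<^sub>R a)"
  proof (cases "c = 0")
    case False
    have "infdist a (span A) \<le> dist a (- (1 / c) *\<^sub>R x)"
      using x by (intro infdist_le span_neg span_scale)
    also have "\<dots> = norm ((1 / c) *\<^sub>R (x + c *\<^sub>R a))"
      using False by (simp add: dist_norm scaleR_add_right add.commute)
    also have "\<dots> = norm (x + c *\<^sub>R a) / \<bar>c\<bar>"
      by simp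
    finally show ?thesis
      using False by (simp add: field_simps)
  qed simp
qed

lemma span_insert_Int_cball_subset:
  fixes a :: "'v::real_normed_vector"
  assumes d: "d > 0" "\<And>x c. x \<in> span A \<Longrightarrow> \<bar>c\<bar> * d \<le> norm (x + c *\<^sub>R a)"
  shows "span (insert a A) \<inter> cball 0 R
           \<subseteq> (\<lambda>(c, x). x + c *\<^sub>R a) `
               ({- \<bar>R\<bar> / d .. \<bar>R\<bar> / d} \<times> (span A \<inter> cball 0 (\<bar>R\<bar> + \<bar>R\<bar> / d * norm a)))"
    (is "_ \<subseteq> ?K")
proof
  fix f assume f: "f \<in> span (insert a A) \<inter> cball 0 R"
  then obtain c where x: "f - c *\<^sub>R a \<in> span A"
    unfolding span_insert by auto
  have "\<bar>c\<bar> * d \<le> \<bar>R\<bar>"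
    using d(2)[OF x, of c] f abs_ge_self[of R] by simp
  then have c: "\<bar>c\<bar> \<le> \<bar>R\<bar> / d"
    using d(1) by (simp add: field_simps)
  have "norm (f - c *\<^sub>R a) \<le> norm f + \<bar>c\<bar> * norm a"
    using norm_triangle_ineq4[of f "c *\<^sub>R a"] by simp
  also have "\<dots> \<le> \<bar>R\<bar> + \<bar>R\<bar> / d * norm a"
    using f mult_right_mono[OF c norm_ge_zero[of a]] abs_ge_self[of R] by simp
  finally have "f - c *\<^sub>R a \<in> span A \<inter> cball 0 (\<bar>R\<bar> + \<bar>R\<bar> / d * norm a)"
    using x by simp
  then show "f \<in> ?K"
    using c by (auto intro!: image_eqI[where x = "(c, f - c *\<^sub>R a)"])
qed

lemma compact_span_Int_cball:
  fixes A :: "'v::real_normed_vector set"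
  assumes "finite A"
  shows "compact (span A \<inter> cball 0 R)"
  using assms
proof (induction A arbitrary: R rule: finite_induct)
  case empty
  have "span {} \<inter> cball (0::'v) R \<subseteq> {0}" by auto
  then show ?case
    using finite_subset finite_imp_compact by blast
next
  case (insert a A)
  show ?case
  proof (cases "a \<in> span A")
    case True
    then show ?thesis using insert.IH by (simp add: span_redundant)
  next
    case False
    obtain d where d: "d > 0" "\<And>x c. x \<in> span A \<Longrightarrow> \<bar>c\<bar> * d \<le> norm (x + c *\<^sub>R a)"
      using span_insert_coefficient_bound[OF closed_if_compact_Int_cball[OF insert.IH] False]
      by blast
    define K where "K = (\<lambda>(c, x). x + c *\<^sub>R a) `
      ({- \<bar>R\<bar> / d .. \<bar>R\<bar> / d} \<times> (span A \<inter> cball 0 (\<bar>R\<bar> + \<bar>R\<bar> / d * norm a)))"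
    have "x + c *\<^sub>R a \<in> span (insert a A)" if "x \<in> span A" for x c
    proof (rule span_add)
      show "x \<in> span (insert a A)"
        using that span_mono[of A "insert a A"] by auto
      show "c *\<^sub>R a \<in> span (insert a A)"
        by (simp add: span_base span_scale)
    qed
    then have "K \<subseteq> span (insert a A)"
      unfolding K_def by auto
    then have "span (insert a A) \<inter> cball 0 R = K \<inter> cball 0 R"
      using span_insert_Int_cball_subset[OF d, where R = R] unfolding K_def by blast
    moreover have "compact K"
      unfolding K_def
      by (intro compact_continuous_image compact_Times insert.IH compact_Icc)
        (auto simp: case_prod_unfold intro!: continuous_intros)
    ultimately show ?thesis
      by (simp add: compact_Int_closed)
  qed
qed

lemma norm_add_ge_on_closure:
  fixes e :: "'v::real_normed_vector"
  assumes "\<And>z. z \<in> S \<Longrightarrow> norm z + 1 \<le> norm (z + e)" and "z \<in> closure S"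
  shows "norm z + 1 \<le> norm (z + e)"
proof -
  have "closed {z. norm z + 1 \<le> norm (z + e)}"
    by (intro closed_Collect_le continuous_intros)
  then have "closure S \<subseteq> {z. norm z + 1 \<le> norm (z + e)}"
    using assms(1) by (intro closure_minimal) auto
  then show ?thesis
    using assms(2) by blast
qed

lemma blinfun_norm_approx:
  fixes S :: "'v::real_normed_vector \<Rightarrow>\<^sub>L 'w::real_normed_vector"
  assumes "\<eta> > 0"
  obtains a where "norm a \<le> 1" "norm S - \<eta> \<le> norm (blinfun_apply S a)"
proof -
  have "\<exists>a. norm a \<le> 1 \<and> norm S - \<eta> \<le> norm (blinfun_apply S a)"
  proof (rule ccontr)
    assume "\<nexists>a. norm a \<le> 1 \<and> norm S - \<eta> \<le> norm (blinfun_apply S a)"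
    then have below: "norm (blinfun_apply S a) < norm S - \<eta>" if "norm a \<le> 1" for a
      using that by (meson not_le)
    have "norm (blinfun_apply S x) \<le> (norm S - \<eta>) * norm x" for x
    proof (cases "x = 0")
      case False
      have "norm (blinfun_apply S ((1 / norm x) *\<^sub>R x)) < norm S - \<eta>"
        using below False by simp
      then show ?thesis
        using False by (simp add: blinfun.scaleR_right field_simps)
    qed simp
    then have "norm S \<le> norm S - \<eta>"
      using below[of 0] by (intro norm_blinfun_bound) auto
    then show False using assms by simp
  qed
  then show thesis using that by blast
qed

lemma functional_norm_approx:
  fixes S :: "'v::real_normed_vector \<Rightarrow>\<^sub>L real"
  assumes "\<eta> > 0"
  obtains a where "norm a \<le> 1" "norm S - \<eta> \<le> blinfun_apply S a"
proof -
  obtain a where a: "norm a \<le> 1" "norm S - \<eta> \<le> \<bar>blinfun_apply S a\<bar>"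
    using blinfun_norm_approx[OF assms, of S] by auto
  show thesis
  proof (cases "blinfun_apply S a \<ge> 0")
    case True
    then show ?thesis using a that by auto
  next
    case False
    then show ?thesis using a that[of "- a"] by (simp add: blinfun.minus_right)
  qed
qed

lemma octahedral_inequality_scaleR:
  fixes e :: "'v::real_normed_vector"
  assumes F: "subspace F" and "0 \<le> \<epsilon>" "\<epsilon> \<le> 1"
    and octahedral: "\<And>f. f \<in> F \<Longrightarrow> (1 - \<epsilon>) * (norm f + 1) \<le> norm (f + e)"
    and f: "f \<in> F"
  shows "(1 - \<epsilon>) * (norm f + \<bar>t\<bar>) \<le> norm (f + t *\<^sub>R e)"
proof (cases "t = 0")
  case True
  then show ?thesis using assms by (simp add: mult_left_le_one_le)
next
  case False
  have "norm ((1 / t) *\<^sub>R f + e) = norm ((1 / t) *\<^sub>R (f + t *\<^sub>R e))"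
    using False by (simp add: scaleR_add_right)
  also have "\<dots> = norm (f + t *\<^sub>R e) / \<bar>t\<bar>"
    by simp
  finally have "(1 - \<epsilon>) * (norm f / \<bar>t\<bar> + 1) \<le> norm (f + t *\<^sub>R e) / \<bar>t\<bar>"
    using octahedral[OF subspace_scale[OF F f, of "1 / t"]] by simp
  then have "\<bar>t\<bar> * ((1 - \<epsilon>) * (norm f / \<bar>t\<bar> + 1)) \<le> norm (f + t *\<^sub>R e)"
    using False by (simp add: mult.commute pos_le_divide_eq)
  moreover have "\<bar>t\<bar> * ((1 - \<epsilon>) * (norm f / \<bar>t\<bar> + 1)) = (1 - \<epsilon>) * (norm f + \<bar>t\<bar>)"
    using False by (simp add: field_simps)
  ultimately show ?thesis by simp
qed

lemma octahedral_inequality_of_net: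
  fixes e :: "'v::real_normed_vector"
  assumes "norm e \<le> 1" "0 < \<epsilon>" "\<epsilon> \<le> 1"
    and net: "\<And>f. f \<in> F \<Longrightarrow> norm f \<le> 2 / \<epsilon> \<Longrightarrow>
                \<exists>g. norm (g - f) < \<epsilon> / 4 \<and> (1 - \<epsilon> / 2) * (norm g + 1) \<le> norm (g + e)"
    and f: "f \<in> F"
  shows "(1 - \<epsilon>) * (norm f + 1) \<le> norm (f + e)"
proof (cases "norm f \<le> 2 / \<epsilon>")
  case False
  then have "2 \<le> \<epsilon> * norm f"
    using \<open>0 < \<epsilon>\<close> by (simp add: field_simps)
  moreover have "norm f - 1 \<le> norm (f + e)"
    using norm_triangle_ineq4[of "f + e" e] \<open>norm e \<le> 1\<close> by simp
  ultimately show ?thesis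
    using \<open>0 < \<epsilon>\<close> by (simp add: algebra_simps)
next
  case True
  then obtain g where g: "norm (g - f) < \<epsilon> / 4" "(1 - \<epsilon> / 2) * (norm g + 1) \<le> norm (g + e)"
    using net[OF f] by blast
  have "norm (g + e) \<le> norm (f + e) + norm (g - f)"
    using norm_triangle_ineq[of "f + e" "g - f"] by (simp add: algebra_simps)
  moreover have "norm f - \<epsilon> / 4 \<le> norm g"
    using norm_triangle_ineq2[of f g] g(1) by (simp add: norm_minus_commute)
  then have "(1 - \<epsilon> / 2) * (norm f + 1 - \<epsilon> / 4) \<le> (1 - \<epsilon> / 2) * (norm g + 1)"
    using \<open>\<epsilon> \<le> 1\<close> by (intro mult_left_mono) auto
  moreover have "(1 - \<epsilon>) * (norm f + 1) + \<epsilon> / 2 \<le> (1 - \<epsilon> / 2) * (norm f + 1 - \<epsilon> / 4) + \<epsilon> / 4"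
    using \<open>0 < \<epsilon>\<close> \<open>\<epsilon> \<le> 1\<close> by (simp add: algebra_simps)
  ultimately show ?thesis
    using g by linarith
qed

lemma sum_norm_add_le_of_norming:
  fixes N :: "('l::real_normed_vector \<Rightarrow>\<^sub>L real) set" and \<eta> :: real
  assumes "finite N"
    and T: "\<And>g. g \<in> N \<Longrightarrow> norm (T g) \<le> 1"
    and norming: "\<And>g. g \<in> N \<Longrightarrow> norm (g + w) - \<eta> \<le> blinfun_apply (g + w) (T g)"
    and e: "blinfun_apply w (\<Sum>g\<in>N. T g) \<le> blinfun_apply e (\<Sum>g\<in>N. T g) + \<kappa>"
  shows "(\<Sum>g\<in>N. norm (g + w)) \<le> (\<Sum>g\<in>N. norm (g + e)) + card N * \<eta> + \<kappa>"
proof -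
  have "(\<Sum>g\<in>N. norm (g + w)) - card N * \<eta> = (\<Sum>g\<in>N. norm (g + w) - \<eta>)"
    by (simp add: sum_subtractf)
  also have "\<dots> \<le> (\<Sum>g\<in>N. blinfun_apply (g + w) (T g))"
    using norming by (rule sum_mono)
  also have "\<dots> = (\<Sum>g\<in>N. blinfun_apply g (T g)) + blinfun_apply w (\<Sum>g\<in>N. T g)"
    by (simp add: blinfun.add_left blinfun.sum_right sum.distrib)
  also have "\<dots> \<le> (\<Sum>g\<in>N. blinfun_apply g (T g)) + blinfun_apply e (\<Sum>g\<in>N. T g) + \<kappa>"
    using e by simp
  also have "(\<Sum>g\<in>N. blinfun_apply g (T g)) + blinfun_apply e (\<Sum>g\<in>N. T g)
               = (\<Sum>g\<in>N. blinfun_apply (g + e) (T g))"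
    by (simp add: blinfun.add_left blinfun.sum_right sum.distrib)
  also have "\<dots> \<le> (\<Sum>g\<in>N. norm (g + e))"
  proof (rule sum_mono)
    fix g assume "g \<in> N"
    have "blinfun_apply (g + e) (T g) \<le> norm (g + e) * norm (T g)"
      using norm_blinfun[of "g + e" "T g"] by simp
    also have "\<dots> \<le> norm (g + e)"
      using T[OF \<open>g \<in> N\<close>] by (simp add: mult_left_le)
    finally show "blinfun_apply (g + e) (T g) \<le> norm (g + e)" .
  qed
  finally show ?thesis by simp
qed

lemma norm_add_ge_of_sum_norm_add:
  fixes N :: "'v::real_normed_vector set"
  assumes "finite N" "g0 \<in> N" "norm e \<le> 1"
    and sums: "(\<Sum>g\<in>N. norm (g + w)) \<le> (\<Sum>g\<in>N. norm (g + e)) + c"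
    and w: "\<And>g. g \<in> N \<Longrightarrow> (1 - \<epsilon>) * (norm g + 1) \<le> norm (g + w)"
  shows "norm g0 + 1 - \<epsilon> * (\<Sum>g\<in>N. norm g + 1) - c \<le> norm (g0 + e)"
proof -
  have "(1 - \<epsilon>) * (\<Sum>g\<in>N. norm g + 1) \<le> (\<Sum>g\<in>N. norm (g + w))"
    unfolding sum_distrib_left using w by (rule sum_mono)
  moreover have "(\<Sum>g\<in>N - {g0}. norm (g + e)) \<le> (\<Sum>g\<in>N - {g0}. norm g + 1)"
    using norm_triangle_ineq[of _ e] \<open>norm e \<le> 1\<close>
    by (intro sum_mono) (meson add_left_mono order_trans)
  ultimately show ?thesis
    using sums sum.remove[OF assms(1,2), of "\<lambda>g. norm (g + e)"]
      sum.remove[OF assms(1,2), of "\<lambda>g. norm g + 1"]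
    by (simp add: algebra_simps)
qed

lemma prod_one_minus_ge:
  fixes \<epsilon> :: "'i \<Rightarrow> real"
  assumes "finite S" "\<And>m. m \<in> S \<Longrightarrow> 0 \<le> \<epsilon> m \<and> \<epsilon> m \<le> 1"
  shows "1 - (\<Sum>m\<in>S. \<epsilon> m) \<le> (\<Prod>m\<in>S. 1 - \<epsilon> m)"
  using assms
proof (induction S rule: finite_induct)
  case (insert x S)
  then have "(1 - \<epsilon> x) * (1 - (\<Sum>m\<in>S. \<epsilon> m)) \<le> (1 - \<epsilon> x) * (\<Prod>m\<in>S. 1 - \<epsilon> m)"
    by (intro mult_left_mono) auto
  moreover have "0 \<le> \<epsilon> x * (\<Sum>m\<in>S. \<epsilon> m)"
    using insert.prems by (simp add: sum_nonneg)
  ultimately show ?case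
    using insert by (simp add: algebra_simps)
qed simp

lemma sum_half_powers_interval:
  "(\<Sum>m\<in>{n..<n + k}. (1 / 2 :: real) ^ (m + 1)) = (1 / 2) ^ n - (1 / 2) ^ (n + k)"
  by (induction k) (auto simp: power_add)

section \<open>Asymptotically l1 sequences\<close>

text \<open>Each \<open>w m\<close> is almost octahedral over the previously chosen vectors; since the errors
  \<open>(1 / 2) ^ (m + 1)\<close> are summable, every tail \<open>w n, w (n + 1), \<dots>\<close> is \<open>(1 - (1 / 2) ^ n)\<close>-equivalent
  to the l1 basis over \<open>span (A n)\<close> (lemma \<open>sum_lower_bound\<close>).\<close>

locale octahedral_sequence =
  fixes w :: "nat \<Rightarrow> 'v::real_normed_vector" and A :: "nat \<Rightarrow> 'v set"
  assumes A_mono: "A m \<subseteq> A (Suc m)"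
    and w_mem: "w m \<in> A (Suc m)"
    and octahedral: "f \<in> span (A m) \<Longrightarrow>
      (1 - (1 / 2) ^ (m + 1)) * (norm f + \<bar>t\<bar>) \<le> norm (f + t *\<^sub>R w m)"
begin

lemma A_mono_le: "i \<le> j \<Longrightarrow> A i \<subseteq> A j"
  using lift_Suc_mono_le[of A, OF A_mono] .

lemma interval_sum_lower_bound:
  assumes f: "f \<in> span (A n)"
  shows "(\<Prod>m\<in>{n..<n + k}. 1 - (1 / 2) ^ (m + 1)) * (norm f + (\<Sum>m\<in>{n..<n + k}. \<bar>t m\<bar>))
           \<le> norm (f + (\<Sum>m\<in>{n..<n + k}. t m *\<^sub>R w m))"
proof (induction k)
  case (Suc k)
  define P where "P = (\<Prod>m\<in>{n..<n + k}. 1 - (1 / 2 :: real) ^ (m + 1))"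
  define g where "g = f + (\<Sum>m\<in>{n..<n + k}. t m *\<^sub>R w m)"
  have "g \<in> span (A (n + k))"
    unfolding g_def
  proof (intro span_add span_sum)
    show "f \<in> span (A (n + k))"
      using f span_mono[OF A_mono_le[of n "n + k"]] by auto
    fix m assume "m \<in> {n..<n + k}"
    then have "w m \<in> A (n + k)"
      using w_mem[of m] A_mono_le[of "Suc m" "n + k"] by auto
    then show "t m *\<^sub>R w m \<in> span (A (n + k))"
      by (simp add: span_base span_scale)
  qed
  then have step:
    "(1 - (1 / 2) ^ (n + k + 1)) * (norm g + \<bar>t (n + k)\<bar>) \<le> norm (g + t (n + k) *\<^sub>R w (n + k))"
    by (rule octahedral)
  have factor: "0 \<le> 1 - (1 / 2 :: real) ^ (m + 1) \<and> 1 - (1 / 2 :: real) ^ (m + 1) \<le> 1" for m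
    using power_le_one[of "1 / 2 :: real" "m + 1"] by simp
  then have "0 \<le> P" "P \<le> 1"
    unfolding P_def by (auto intro!: prod_nonneg prod_le_1)
  then have "P * (norm f + (\<Sum>m\<in>{n..<n + k}. \<bar>t m\<bar>) + \<bar>t (n + k)\<bar>) \<le> norm g + \<bar>t (n + k)\<bar>"
    using Suc.IH mult_left_le_one_le[of "\<bar>t (n + k)\<bar>" P]
    unfolding P_def[symmetric] g_def[symmetric] by (simp add: algebra_simps)
  then have "(1 - (1 / 2) ^ (n + k + 1)) * (P * (norm f + (\<Sum>m\<in>{n..<n + k}. \<bar>t m\<bar>) + \<bar>t (n + k)\<bar>))
               \<le> norm (g + t (n + k) *\<^sub>R w (n + k))"
    using step mult_left_mono factor[of "n + k"] by (meson order_trans)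
  moreover have "(\<Prod>m\<in>{n..<n + Suc k}. 1 - (1 / 2) ^ (m + 1)) = (1 - (1 / 2) ^ (n + k + 1)) * P"
    unfolding P_def by simp
  moreover have "(\<Sum>m\<in>{n..<n + Suc k}. \<bar>t m\<bar>) = (\<Sum>m\<in>{n..<n + k}. \<bar>t m\<bar>) + \<bar>t (n + k)\<bar>"
    by simp
  moreover have "f + (\<Sum>m\<in>{n..<n + Suc k}. t m *\<^sub>R w m) = g + t (n + k) *\<^sub>R w (n + k)"
    unfolding g_def by (simp add: algebra_simps)
  ultimately show ?case
    by (simp only: mult.assoc add.assoc)
qed simp

lemma sum_lower_bound:
  assumes f: "f \<in> span (A n)" and M: "finite M" "M \<subseteq> {n..}"
  shows "(1 - (1 / 2) ^ n) * (norm f + (\<Sum>m\<in>M. \<bar>t m\<bar>)) \<le> norm (f + (\<Sum>m\<in>M. t m *\<^sub>R w m))"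
proof -
  obtain k where "M \<subseteq> {..<k}"
    using finite_nat_bounded[OF M(1)] by blast
  then have M_sub: "M \<subseteq> {n..<n + k}"
    using M(2) by fastforce
  define t' where "t' m = (if m \<in> M then t m else 0)" for m
  have sum_t': "(\<Sum>m\<in>{n..<n + k}. \<bar>t' m\<bar>) = (\<Sum>m\<in>M. \<bar>t m\<bar>)"
    "(\<Sum>m\<in>{n..<n + k}. t' m *\<^sub>R w m) = (\<Sum>m\<in>M. t m *\<^sub>R w m)"
    unfolding t'_def using M_sub by (auto intro!: sum.mono_neutral_cong_right)
  have "1 - (1 / 2) ^ n \<le> 1 - (\<Sum>m\<in>{n..<n + k}. (1 / 2 :: real) ^ (m + 1))"
    unfolding sum_half_powers_interval by simp
  also have "\<dots> \<le> (\<Prod>m\<in>{n..<n + k}. 1 - (1 / 2) ^ (m + 1))"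
    by (intro prod_one_minus_ge conjI zero_le_power power_le_one) auto
  finally have "(1 - (1 / 2) ^ n) * (norm f + (\<Sum>m\<in>M. \<bar>t m\<bar>))
                  \<le> (\<Prod>m\<in>{n..<n + k}. 1 - (1 / 2) ^ (m + 1)) * (norm f + (\<Sum>m\<in>M. \<bar>t m\<bar>))"
    by (intro mult_right_mono) (auto intro: sum_nonneg)
  also have "\<dots> \<le> norm (f + (\<Sum>m\<in>M. t m *\<^sub>R w m))"
    using interval_sum_lower_bound[OF f, of k t'] unfolding sum_t' .
  finally show ?thesis .
qed

lemma subspace_Union_span: "subspace (\<Union>n. span (A n))"
  unfolding subspace_def
proof (intro conjI ballI allI)
  show "0 \<in> (\<Union>n. span (A n))"
    using span_0 by blast
  fix x y assume "x \<in> (\<Union>n. span (A n))" "y \<in> (\<Union>n. span (A n))"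
  then obtain i j where "x \<in> span (A i)" "y \<in> span (A j)"
    by blast
  then have "x \<in> span (A (max i j))" "y \<in> span (A (max i j))"
    using span_mono[OF A_mono_le[of i "max i j"]] span_mono[OF A_mono_le[of j "max i j"]] by auto
  then show "x + y \<in> (\<Union>n. span (A n))"
    using span_add by blast
next
  fix c x assume "x \<in> (\<Union>n. span (A n))"
  then show "c *\<^sub>R x \<in> (\<Union>n. span (A n))"
    using span_scale by blast
qed

lemma cone_combination_le_norm:
  assumes z: "z \<in> span (A N)"
    and \<eta>: "\<eta> * norm z \<le> \<delta>" "\<eta> \<le> \<delta>" "(1 / 2) ^ N \<le> \<eta>"
    and S: "finite S" "S \<subseteq> insert (z, norm z - \<delta>) ((\<lambda>m. (w m, 1 - \<delta>)) ` {N..})"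
    and u: "\<forall>q\<in>S. 0 \<le> u q"
  shows "(\<Sum>q\<in>S. u q * snd q) \<le> norm (\<Sum>q\<in>S. u q *\<^sub>R fst q)"
proof -
  define q0 where "q0 = (z, norm z - \<delta>)"
  have "S - {q0} \<subseteq> (\<lambda>m. (w m, 1 - \<delta>)) ` {N..}"
    using S(2) unfolding q0_def by blast
  then obtain M where M: "M \<subseteq> {N..}" "inj_on (\<lambda>m. (w m, 1 - \<delta>)) M"
    "S - {q0} = (\<lambda>m. (w m, 1 - \<delta>)) ` M"
    unfolding subset_image_inj by blast
  have "finite M"
    using M(2,3) S(1) finite_image_iff by (metis finite_Diff)
  define l where "l = (if q0 \<in> S then u q0 else 0)"
  define t where "t m = u (w m, 1 - \<delta>)" for m
  have split: "(\<Sum>q\<in>S. h q) = (if q0 \<in> S then h q0 else 0) + (\<Sum>q\<in>S - {q0}. h q)"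
    for h :: "'v \<times> real \<Rightarrow> 'c::comm_monoid_add"
    using S(1) by (simp add: sum.remove)
  have sum_snd: "(\<Sum>q\<in>S. u q * snd q) = l * (norm z - \<delta>) + (\<Sum>m\<in>M. t m) * (1 - \<delta>)"
    unfolding split M(3) sum.reindex[OF M(2)] by (simp add: l_def t_def q0_def sum_distrib_right)
  have sum_fst: "(\<Sum>q\<in>S. u q *\<^sub>R fst q) = l *\<^sub>R z + (\<Sum>m\<in>M. t m *\<^sub>R w m)"
    unfolding split M(3) sum.reindex[OF M(2)] by (simp add: l_def t_def q0_def)
  have l: "0 \<le> l" and t: "\<forall>m\<in>M. 0 \<le> t m"
    using u M(3) unfolding l_def t_def by auto
  have "l * (norm z - \<delta>) + (\<Sum>m\<in>M. t m) * (1 - \<delta>) \<le> (1 - \<eta>) * (l * norm z + (\<Sum>m\<in>M. t m))"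
    using mult_left_mono[OF \<eta>(1) l] mult_left_mono[OF \<eta>(2) sum_nonneg[of M t]] t
    by (simp add: algebra_simps)
  also have "\<dots> = (1 - \<eta>) * (norm (l *\<^sub>R z) + (\<Sum>m\<in>M. \<bar>t m\<bar>))"
    using l t by simp
  also have "\<dots> \<le> (1 - (1 / 2) ^ N) * (norm (l *\<^sub>R z) + (\<Sum>m\<in>M. \<bar>t m\<bar>))"
    using \<eta>(3) by (intro mult_right_mono) auto
  also have "\<dots> \<le> norm (l *\<^sub>R z + (\<Sum>m\<in>M. t m *\<^sub>R w m))"
    using sum_lower_bound[OF span_scale[OF z] \<open>finite M\<close> M(1)] .
  finally show ?thesis
    unfolding sum_snd sum_fst .
qed

lemma tail_norming_functional:
  assumes z: "z \<in> span (A n)" and \<delta>: "\<delta> > 0"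
  obtains G :: "'v \<Rightarrow>\<^sub>L real" where "norm G \<le> 1" "norm z - \<delta> \<le> blinfun_apply G z"
    "eventually (\<lambda>m. 1 - \<delta> \<le> blinfun_apply G (w m)) sequentially"
proof -
  define \<eta> where "\<eta> = \<delta> / (norm z + 1)"
  have \<eta>: "\<eta> > 0" "\<eta> * norm z \<le> \<delta>" "\<eta> \<le> \<delta>"
    using \<delta> by (auto simp: \<eta>_def field_simps add_pos_nonneg)
  obtain N0 where "(1 / 2 :: real) ^ N0 < \<eta>"
    using real_arch_pow_inv[OF \<eta>(1), of "1 / 2"] by auto
  define N where "N = max n N0"
  have "(1 / 2 :: real) ^ N \<le> (1 / 2) ^ N0"
    by (rule power_decreasing) (auto simp: N_def)
  then have N: "(1 / 2 :: real) ^ N \<le> \<eta>"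
    using \<open>(1 / 2) ^ N0 < \<eta>\<close> by linarith
  have zN: "z \<in> span (A N)"
    using z span_mono[OF A_mono_le[of n N]] by (auto simp: N_def)
  define P where "P = insert (z, norm z - \<delta>) ((\<lambda>m. (w m, 1 - \<delta>)) ` {N..})"
  obtain G :: "'v \<Rightarrow>\<^sub>L real" where "norm G \<le> 1" "\<forall>(v, c)\<in>P. c \<le> blinfun_apply G v"
    using mazur_orlicz_norm[of P] cone_combination_le_norm[OF zN \<eta>(2,3) N] unfolding P_def by blast
  then show thesis
    using that[of G] unfolding P_def eventually_sequentially by auto
qed

end

lemma octahedral_sequence_exists:
  fixes E W :: "'v::real_normed_vector set" and d :: "nat \<Rightarrow> 'v"
  assumes d: "range d \<subseteq> E" and W: "W \<subseteq> E"
    and octahedral: "\<And>B \<epsilon>. finite B \<Longrightarrow> B \<subseteq> E \<Longrightarrow> 0 < \<epsilon> \<Longrightarrow>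
           \<exists>w\<in>W. \<forall>f\<in>span B. \<forall>t. (1 - \<epsilon>) * (norm f + \<bar>t\<bar>) \<le> norm (f + t *\<^sub>R w)"
  obtains w A where "octahedral_sequence w A" "range w \<subseteq> W"
    "\<And>m. finite (A m)" "\<And>m. A m \<subseteq> E" "\<And>m. d m \<in> A m"
proof -
  define good where "good B m w \<longleftrightarrow>
    w \<in> W \<and> (\<forall>f\<in>span B. \<forall>t. (1 - (1 / 2) ^ (m + 1)) * (norm f + \<bar>t\<bar>) \<le> norm (f + t *\<^sub>R w))" for B m w
  define pick where "pick B m = (SOME w. good B m w)" for B m
  have pick: "good B m (pick B m)" if "finite B" "B \<subseteq> E" for B m
    unfolding pick_def good_def
    by (rule someI_ex) (use octahedral[OF that, of "(1 / 2) ^ (m + 1)"] in auto)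
  define A where "A = rec_nat {d 0} (\<lambda>m B. insert (d (Suc m)) (insert (pick B m) B))"
  have A_Suc: "A (Suc m) = insert (d (Suc m)) (insert (pick (A m) m) (A m))" for m
    unfolding A_def by simp
  have A: "finite (A m) \<and> A m \<subseteq> E" for m
  proof (induction m)
    case 0
    then show ?case using d by (auto simp: A_def)
  next
    case (Suc m)
    then show ?case
      using pick[of "A m" m] d W unfolding A_Suc good_def by auto
  qed
  define w where "w m = pick (A m) m" for m
  have good_w: "good (A m) m (w m)" for m
    unfolding w_def using A pick by blast
  have "octahedral_sequence w A"
    by unfold_locales (use good_w in \<open>auto simp: A_Suc w_def good_def\<close>)
  moreover have "d m \<in> A m" for m
    by (cases m) (simp_all add: A_def)
  ultimately show thesis
    using that good_w A unfolding good_def by blast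
qed

section \<open>Projective tensors\<close>

lemma bounded_linear_blinfun_apply2:
  "bounded_linear (\<lambda>T :: 'a::real_normed_vector \<Rightarrow>\<^sub>L 'b::real_normed_vector \<Rightarrow>\<^sub>L real.
     blinfun_apply (blinfun_apply T x) y)"
  by (intro bounded_linear_compose[OF blinfun.bounded_linear_left[of y]] blinfun.bounded_linear_left)

lemma ptensor_apply [simp]: "blinfun_apply (ptensor x y) T = blinfun_apply (blinfun_apply T x) y"
  unfolding ptensor_def bounded_linear_Blinfun_apply[OF bounded_linear_blinfun_apply2] ..

lemma bidual_emb_apply [simp]: "blinfun_apply (bidual_emb x) g = blinfun_apply g x"
  unfolding bidual_emb_def bounded_linear_Blinfun_apply[OF blinfun.bounded_linear_left] ..

lemma norm_blinfun_apply2_le: "norm (blinfun_apply (blinfun_apply T x) y) \<le> norm T * norm x * norm y"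
  by (meson norm_blinfun mult_right_mono norm_ge_zero order_trans)

lemma norm_ptensor_le: "norm (ptensor x y) \<le> norm x * norm y"
proof (rule norm_blinfun_bound)
  fix T
  show "norm (blinfun_apply (ptensor x y) T) \<le> norm x * norm y * norm T"
    using norm_blinfun_apply2_le[of T x y] by (simp add: mult_ac)
qed simp

lemma bounded_bilinear_ptensor:
  "bounded_bilinear (ptensor :: 'a::real_normed_vector \<Rightarrow> 'b::real_normed_vector \<Rightarrow> ('a, 'b) ptensor_bidual)"
proof
  show "ptensor (x + x') y = ptensor x y + ptensor x' y"
    "ptensor x (y + y') = ptensor x y + ptensor x y'"
    "ptensor (r *\<^sub>R x) y = r *\<^sub>R ptensor x y"
    "ptensor x (r *\<^sub>R y) = r *\<^sub>R ptensor x y" for x x' :: 'a and y y' :: 'b and r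
    by (auto intro!: blinfun_eqI simp: blinfun.bilinear_simps)
  have "norm (ptensor x y) \<le> norm x * norm y * 1" for x :: 'a and y :: 'b
    using norm_ptensor_le by simp
  then show "\<exists>K. \<forall>x y. norm (ptensor x y :: ('a, 'b) ptensor_bidual) \<le> norm x * norm y * K"
    by blast
qed

lemma norm_ptensor: "norm (ptensor x y) = norm x * norm y"
proof (rule antisym)
  show "norm (ptensor x y) \<le> norm x * norm y"
    by (rule norm_ptensor_le)
  obtain g where g: "norm g \<le> 1" "blinfun_apply g x = norm x"
    using exists_norming_functional by blast
  obtain h where h: "norm h \<le> 1" "blinfun_apply h y = norm y"
    using exists_norming_functional by blast
  define T where "T = blinfun_scaleR_left h o\<^sub>L g"
  have T_bound: "norm (blinfun_apply T x') \<le> 1 * norm x'" for x'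
  proof -
    have "norm (blinfun_apply T x') = \<bar>blinfun_apply g x'\<bar> * norm h"
      by (simp add: T_def)
    also have "\<dots> \<le> norm g * norm x'"
      using h(1) norm_blinfun[of g x'] mult_left_le[of "norm h" "\<bar>blinfun_apply g x'\<bar>"] by simp
    also have "\<dots> \<le> 1 * norm x'"
      using g(1) by (intro mult_right_mono) auto
    finally show ?thesis .
  qed
  have "norm T \<le> 1"
    by (rule norm_blinfun_bound) (use T_bound in auto)
  have "norm x * norm y = blinfun_apply (ptensor x y) T"
    using g(2) h(2) by (simp add: T_def blinfun.scaleR_left)
  also have "\<dots> \<le> norm (ptensor x y) * norm T"
    using norm_blinfun[of "ptensor x y" T] by simp
  also have "\<dots> \<le> norm (ptensor x y)"
    using \<open>norm T \<le> 1\<close> by (simp add: mult_left_le)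
  finally show "norm x * norm y \<le> norm (ptensor x y)" .
qed

definition partial_eval ::
  "('a::real_normed_vector \<Rightarrow>\<^sub>L 'b::real_normed_vector \<Rightarrow>\<^sub>L real) \<Rightarrow> 'b \<Rightarrow> 'a \<Rightarrow>\<^sub>L real" where
  "partial_eval T y = Blinfun (\<lambda>x. blinfun_apply (blinfun_apply T x) y)"

lemma partial_eval_apply [simp]:
  "blinfun_apply (partial_eval T y) x = blinfun_apply (blinfun_apply T x) y"
proof -
  have "bounded_linear (\<lambda>x. blinfun_apply (blinfun_apply T x) y)"
    by (intro bounded_linear_compose[OF blinfun.bounded_linear_left[of y]] blinfun.bounded_linear_right)
  then show ?thesis
    unfolding partial_eval_def by (simp add: bounded_linear_Blinfun_apply)
qed

lemma norm_partial_eval_le: "norm (partial_eval T y) \<le> norm T * norm y"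
proof (rule norm_blinfun_bound)
  fix x
  show "norm (blinfun_apply (partial_eval T y) x) \<le> norm T * norm y * norm x"
    using norm_blinfun_apply2_le[of T x y] by (simp add: mult_ac)
qed simp

lemma bidual_tensor_apply [simp]:
  "blinfun_apply (bidual_tensor u y) T = blinfun_apply u (partial_eval T y)"
proof -
  have "bounded_linear (\<lambda>T. partial_eval T y)"
    by (rule bounded_linear_intro[where K = "norm y"])
      (auto intro!: blinfun_eqI simp: blinfun.bilinear_simps norm_partial_eval_le)
  then have "bounded_linear (\<lambda>T. blinfun_apply u (partial_eval T y))"
    by (rule bounded_linear_compose[OF blinfun.bounded_linear_right])
  then show ?thesis
    unfolding bidual_tensor_def partial_eval_def[symmetric] by (simp add: bounded_linear_Blinfun_apply)
qed

lemma norm_bidual_tensor_le: "norm (bidual_tensor u y) \<le> norm u * norm y"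
proof (rule norm_blinfun_bound)
  fix T
  have "norm (blinfun_apply u (partial_eval T y)) \<le> norm u * (norm T * norm y)"
    using norm_blinfun[of u] norm_partial_eval_le[of T y]
    by (meson mult_left_mono norm_ge_zero order_trans)
  then show "norm (blinfun_apply (bidual_tensor u y) T) \<le> norm u * norm y * norm T"
    by (simp add: algebra_simps)
qed simp

lemma ptensor_eq_bidual_tensor: "ptensor x y = bidual_tensor (bidual_emb x) y"
  by (rule blinfun_eqI) simp

lemma bidual_tensor_add_left: "bidual_tensor (u + v) y = bidual_tensor u y + bidual_tensor v y"
  by (rule blinfun_eqI) (simp add: blinfun.add_left)

lemma subspace_ptensor_space: "subspace ptensor_space"
  unfolding ptensor_space_def by (intro subspace_closure subspace_span)

lemma ptensor_mem_ptensor_space: "ptensor x y \<in> ptensor_space"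
proof -
  have "ptensor x y \<in> span {ptensor x y | x y. True}"
    by (rule span_base) blast
  then show ?thesis
    unfolding ptensor_space_def using closure_subset by blast
qed

lemma ptensor_space_subset_closure_span:
  fixes CX :: "'a::real_normed_vector set" and CY :: "'b::real_normed_vector set"
  assumes "closure CX = UNIV" "closure CY = UNIV"
  shows "(ptensor_space :: ('a, 'b) ptensor_bidual set)
           \<subseteq> closure (span ((\<lambda>(x, y). ptensor x y) ` (CX \<times> CY)))"
  (is "_ \<subseteq> closure (span ?D)")
proof -
  have "continuous_on (closure (CX \<times> CY)) (\<lambda>(x, y). ptensor x y)"
    unfolding case_prod_unfold
    by (intro bounded_bilinear.continuous_on[OF bounded_bilinear_ptensor] continuous_intros)
  moreover have "?D \<subseteq> closure (span ?D)"
    by (rule order_trans[OF span_superset closure_subset])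
  ultimately have "(\<lambda>(x, y). ptensor x y) ` closure (CX \<times> CY) \<subseteq> closure (span ?D)"
    by (rule image_closure_subset[OF _ closed_closure])
  then have "{ptensor x y | x y. True} \<subseteq> closure (span ?D)"
    using assms by (auto simp: closure_Times)
  then have "span {ptensor x y | x y. True} \<subseteq> closure (span ?D)"
    by (intro span_minimal subspace_closure subspace_span)
  then show ?thesis
    unfolding ptensor_space_def by (intro closure_minimal) auto
qed

lemma ptensor_blinfun_representation:
  fixes G :: "('a::real_normed_vector, 'b::real_normed_vector) ptensor_bidual \<Rightarrow>\<^sub>L real"
  assumes G: "norm G \<le> 1"
  obtains T where "norm T \<le> 1" "\<And>v. v \<in> ptensor_space \<Longrightarrow> blinfun_apply v T = blinfun_apply G v"
proof -
  have G_ptensor: "norm (blinfun_apply G (ptensor x y)) \<le> norm x * norm y" for x :: 'a and y :: 'b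
    using norm_blinfun[of G "ptensor x y"] G norm_ptensor_le[of x y]
    by (smt (verit) mult_left_le_one_le norm_ge_zero zero_le_mult_iff)
  interpret bilinear: bounded_bilinear "\<lambda>x y. blinfun_apply G (ptensor x y)"
  proof
    show "\<exists>K. \<forall>x y. norm (blinfun_apply G (ptensor x y)) \<le> norm x * norm y * K"
      using G_ptensor by (intro exI[of _ 1]) simp
  qed (simp_all add: bounded_bilinear.add_left[OF bounded_bilinear_ptensor]
      bounded_bilinear.add_right[OF bounded_bilinear_ptensor]
      bounded_bilinear.scaleR_left[OF bounded_bilinear_ptensor]
      bounded_bilinear.scaleR_right[OF bounded_bilinear_ptensor] blinfun.bilinear_simps)
  define T where "T = Blinfun bilinear.prod_right"
  have T_apply: "blinfun_apply (blinfun_apply T x) y = blinfun_apply G (ptensor x y)" for x y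
    by (simp add: T_def bounded_linear_Blinfun_apply[OF bilinear.bounded_linear_prod_right])
  have T_bound: "norm (blinfun_apply T x) \<le> 1 * norm x" for x
    by (rule norm_blinfun_bound) (use G_ptensor T_apply in auto)
  have "norm T \<le> 1"
    by (rule norm_blinfun_bound) (use T_bound in auto)
  define E where "E = {v :: ('a, 'b) ptensor_bidual. blinfun_apply v T = blinfun_apply G v}"
  have "subspace E"
    unfolding subspace_def E_def by (simp add: blinfun.bilinear_simps)
  moreover have "{ptensor x y | x y. True} \<subseteq> E"
    unfolding E_def using T_apply by auto
  ultimately have "span {ptensor x y | x y. True} \<subseteq> E"
    by (rule span_minimal[rotated])
  moreover have "closed E"
    unfolding E_def by (intro closed_Collect_eq) (auto intro!: continuous_intros)
  ultimately have "ptensor_space \<subseteq> E"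
    unfolding ptensor_space_def by (rule closure_minimal)
  then show thesis
    using that[OF \<open>norm T \<le> 1\<close>] unfolding E_def by blast
qed

lemma ptensor_space_separable:
  assumes sepX: "separable_space (euclidean :: 'a::real_normed_vector topology)"
    and sepY: "separable_space (euclidean :: 'b::real_normed_vector topology)"
  obtains d :: "nat \<Rightarrow> ('a::real_normed_vector, 'b::real_normed_vector) ptensor_bidual"
  where "range d \<subseteq> ptensor_space" "ptensor_space \<subseteq> closure (span (range d))"
proof -
  obtain CX :: "'a set" where CX: "countable CX" "closure CX = UNIV"
    using sepX unfolding separable_space_def by auto
  obtain CY :: "'b set" where CY: "countable CY" "closure CY = UNIV"
    using sepY unfolding separable_space_def by auto
  define D where "D = (\<lambda>(x, y). ptensor x y) ` (CX \<times> CY)"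
  have "countable D" "D \<noteq> {}"
    using CX CY unfolding D_def by auto
  then have "range (from_nat_into D) = D"
    by (simp add: range_from_nat_into)
  moreover have "D \<subseteq> ptensor_space"
    unfolding D_def using ptensor_mem_ptensor_space by auto
  ultimately show thesis
    using that[of "from_nat_into D"] ptensor_space_subset_closure_span[OF CX(2) CY(2)]
    unfolding D_def by simp
qed

text \<open>The norming functionals \<open>T g\<close> of the vectors \<open>g + w\<close> add up to \<open>S\<close>, and an elementary
  tensor almost norming \<open>S\<close> replaces \<open>w\<close> for all \<open>g\<close> at once.\<close>

lemma octahedral_ptensor_finite:
  fixes A :: "('a::real_normed_vector, 'b::real_normed_vector) ptensor_bidual set"
  assumes oct: "octahedral_on (ptensor_space :: ('a, 'b) ptensor_bidual set)"
    and A: "finite A" "A \<subseteq> ptensor_space" and N: "finite N" "N \<subseteq> span A" and "\<epsilon> > 0"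
  obtains a :: 'a and b :: 'b where "norm a \<le> 1" "norm b \<le> 1"
    "\<And>g. g \<in> N \<Longrightarrow> (1 - \<epsilon>) * (norm g + 1) \<le> norm (g + ptensor a b)"
proof (cases "N = {}")
  case True
  then show ?thesis using that[of 0 0] by simp
next
  case False
  define R where "R = (\<Sum>g\<in>N. norm g + 1)"
  define \<epsilon>1 where "\<epsilon>1 = \<epsilon> / (2 * R)"
  define \<eta> where "\<eta> = \<epsilon> / (2 * (card N + 2))"
  have "R > 0"
    unfolding R_def using False N(1) by (intro sum_pos) (auto simp: add_nonneg_pos)
  then have "\<epsilon>1 > 0" "\<epsilon>1 * R = \<epsilon> / 2"
    using \<open>\<epsilon> > 0\<close> by (simp_all add: \<epsilon>1_def)
  have "\<eta> > 0" "(card N + 2) * \<eta> = \<epsilon> / 2"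
    using \<open>\<epsilon> > 0\<close> by (simp_all add: \<eta>_def field_simps)
  obtain w where w: "norm w = 1" "\<And>f t. f \<in> span A \<Longrightarrow> (1 - \<epsilon>1) * (norm f + \<bar>t\<bar>) \<le> norm (f + t *\<^sub>R w)"
    using oct[unfolded octahedral_on_def, rule_format, of A \<epsilon>1] A \<open>\<epsilon>1 > 0\<close> by auto
  have w_N: "(1 - \<epsilon>1) * (norm g + 1) \<le> norm (g + w)" if "g \<in> N" for g
    using w(2)[of g 1] N(2) that by auto
  have "\<forall>g. \<exists>T. norm T \<le> 1 \<and> norm (g + w) - \<eta> \<le> blinfun_apply (g + w) T"
    using functional_norm_approx[OF \<open>\<eta> > 0\<close>] by metis
  then obtain T where T: "\<And>g. norm (T g) \<le> 1" "\<And>g. norm (g + w) - \<eta> \<le> blinfun_apply (g + w) (T g)"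
    by metis
  define S where "S = (\<Sum>g\<in>N. T g)"
  obtain a where a: "norm a \<le> 1" "norm S - \<eta> \<le> norm (blinfun_apply S a)"
    using blinfun_norm_approx[OF \<open>\<eta> > 0\<close>] by blast
  obtain b where b: "norm b \<le> 1"
    "norm (blinfun_apply S a) - \<eta> \<le> blinfun_apply (blinfun_apply S a) b"
    using functional_norm_approx[OF \<open>\<eta> > 0\<close>] by blast
  have "blinfun_apply w S \<le> norm w * norm S"
    using norm_blinfun[of w S] by simp
  then have wS: "blinfun_apply w S \<le> blinfun_apply (ptensor a b) S + 2 * \<eta>"
    using w(1) a(2) b(2) by simp
  have "(\<Sum>g\<in>N. norm (g + w)) \<le> (\<Sum>g\<in>N. norm (g + ptensor a b)) + card N * \<eta> + 2 * \<eta>"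
    by (rule sum_norm_add_le_of_norming[OF N(1)]) (use T wS[unfolded S_def] in auto)
  moreover have "norm (ptensor a b) \<le> 1"
    using a(1) b(1) by (simp add: norm_ptensor mult_le_one)
  ultimately have "norm g + 1 - \<epsilon>1 * R - (card N * \<eta> + 2 * \<eta>) \<le> norm (g + ptensor a b)"
    if "g \<in> N" for g
    unfolding R_def using that w_N
    by (intro norm_add_ge_of_sum_norm_add[OF N(1)]) (simp_all add: add.assoc)
  moreover have "\<epsilon>1 * R + (card N * \<eta> + 2 * \<eta>) = \<epsilon>"
    using \<open>\<epsilon>1 * R = \<epsilon> / 2\<close> \<open>(card N + 2) * \<eta> = \<epsilon> / 2\<close> by (simp add: algebra_simps)
  moreover have "(1 - \<epsilon>) * (norm g + 1) \<le> norm g + 1 - \<epsilon>" for g :: "('a, 'b) ptensor_bidual"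
    using \<open>\<epsilon> > 0\<close> by (simp add: algebra_simps)
  ultimately show ?thesis
    using that[OF a(1) b(1)] by (smt (verit))
qed

lemma octahedral_ptensor_elementary:
  fixes A :: "('a::real_normed_vector, 'b::real_normed_vector) ptensor_bidual set"
  assumes oct: "octahedral_on (ptensor_space :: ('a, 'b) ptensor_bidual set)"
    and A: "finite A" "A \<subseteq> ptensor_space" and "\<epsilon> > 0"
  obtains a :: 'a and b :: 'b where "norm a \<le> 1" "norm b \<le> 1"
    "\<And>f t. f \<in> span A \<Longrightarrow> (1 - \<epsilon>) * (norm f + \<bar>t\<bar>) \<le> norm (f + t *\<^sub>R ptensor a b)"
proof -
  define \<epsilon>' where "\<epsilon>' = min \<epsilon> 1"
  have \<epsilon>': "0 < \<epsilon>'" "\<epsilon>' \<le> 1" "\<epsilon>' \<le> \<epsilon>"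
    using \<open>\<epsilon> > 0\<close> by (auto simp: \<epsilon>'_def)
  define K where "K = span A \<inter> cball 0 (2 / \<epsilon>')"
  obtain N where N: "finite N" "N \<subseteq> K" "K \<subseteq> (\<Union>g\<in>N. ball g (\<epsilon>' / 4))"
    using seq_compact_imp_totally_bounded[OF
        compact_imp_seq_compact[OF compact_span_Int_cball[OF A(1)]]] \<epsilon>'(1) unfolding K_def by (metis divide_pos_pos zero_less_numeral)
  obtain a b where ab: "norm a \<le> 1" "norm b \<le> 1"
    "\<And>g. g \<in> N \<Longrightarrow> (1 - \<epsilon>' / 2) * (norm g + 1) \<le> norm (g + ptensor a b)"
    using octahedral_ptensor_finite[OF oct A N(1), of "\<epsilon>' / 2"] N(2) \<epsilon>'(1) unfolding K_def by auto
  have e: "norm (ptensor a b) \<le> 1"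
    using ab(1,2) by (simp add: norm_ptensor mult_le_one)
  have "(1 - \<epsilon>') * (norm f + 1) \<le> norm (f + ptensor a b)" if f: "f \<in> span A" for f
  proof (rule octahedral_inequality_of_net[OF e \<epsilon>'(1,2) _ f])
    fix f' assume "f' \<in> span A" "norm f' \<le> 2 / \<epsilon>'"
    then obtain g where "g \<in> N" "dist g f' < \<epsilon>' / 4"
      using N(3) unfolding K_def by auto
    then show "\<exists>g. norm (g - f') < \<epsilon>' / 4 \<and> (1 - \<epsilon>' / 2) * (norm g + 1) \<le> norm (g + ptensor a b)"
      using ab(3) by (auto simp: dist_norm)
  qed
  then have "(1 - \<epsilon>') * (norm f + \<bar>t\<bar>) \<le> norm (f + t *\<^sub>R ptensor a b)" if "f \<in> span A" for f t
    using \<epsilon>' that by (intro octahedral_inequality_scaleR[OF subspace_span]) auto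
  moreover have "(1 - \<epsilon>) * (norm f + \<bar>t\<bar>) \<le> (1 - \<epsilon>') * (norm f + \<bar>t\<bar>)"
    for f :: "('a, 'b) ptensor_bidual" and t
    using \<epsilon>'(3) by (intro mult_right_mono) auto
  ultimately show thesis
    using that[OF ab(1,2)] by (meson order_trans)
qed

lemma exists_octahedral_tensor_sequence:
  assumes sepX: "separable_space (euclidean :: 'a::real_normed_vector topology)"
    and sepY: "separable_space (euclidean :: 'b::real_normed_vector topology)"
    and oct: "octahedral_on (ptensor_space :: ('a, 'b) ptensor_bidual set)"
  obtains a :: "nat \<Rightarrow> 'a::real_normed_vector" and b :: "nat \<Rightarrow> 'b::real_normed_vector" and A
  where "octahedral_sequence (\<lambda>m. ptensor (a m) (b m)) A"
    "\<And>m. norm (a m) \<le> 1" "\<And>m. norm (b m) \<le> 1" "\<And>m. A m \<subseteq> ptensor_space"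
    "ptensor_space \<subseteq> closure (\<Union>n. span (A n))"
proof -
  obtain d :: "nat \<Rightarrow> ('a, 'b) ptensor_bidual"
    where d: "range d \<subseteq> ptensor_space" "ptensor_space \<subseteq> closure (span (range d))"
    by (rule ptensor_space_separable[OF sepX sepY])
  define W where "W = {ptensor a b | (a :: 'a) (b :: 'b). norm a \<le> 1 \<and> norm b \<le> 1}"
  have W: "W \<subseteq> ptensor_space"
    unfolding W_def using ptensor_mem_ptensor_space by auto
  have oct_W: "\<exists>w\<in>W. \<forall>f\<in>span B. \<forall>t. (1 - \<epsilon>) * (norm f + \<bar>t\<bar>) \<le> norm (f + t *\<^sub>R w)"
    if B: "finite B" "B \<subseteq> ptensor_space" "0 < \<epsilon>" for B :: "('a, 'b) ptensor_bidual set" and \<epsilon>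
  proof -
    obtain a b where "norm a \<le> 1" "norm b \<le> 1"
      "\<And>f t. f \<in> span B \<Longrightarrow> (1 - \<epsilon>) * (norm f + \<bar>t\<bar>) \<le> norm (f + t *\<^sub>R ptensor a b)"
      using octahedral_ptensor_elementary[OF oct B] by blast
    then show ?thesis
      unfolding W_def by blast
  qed
  obtain w A where seq: "octahedral_sequence w A" "range w \<subseteq> W"
    "\<And>m. finite (A m)" "\<And>m. A m \<subseteq> ptensor_space" "\<And>m. d m \<in> A m"
    using octahedral_sequence_exists[OF d(1) W oct_W] by blast
  have "\<forall>m. \<exists>ab. w m = ptensor (fst ab) (snd ab) \<and> norm (fst ab) \<le> 1 \<and> norm (snd ab) \<le> 1"
    using seq(2) unfolding W_def by fastforce
  then obtain ab where ab: "\<And>m. w m = ptensor (fst (ab m)) (snd (ab m))"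
    "\<And>m. norm (fst (ab m)) \<le> 1" "\<And>m. norm (snd (ab m)) \<le> 1"
    by metis
  interpret octahedral_sequence w A by (rule seq(1))
  have "range d \<subseteq> (\<Union>n. span (A n))"
    using seq(5) span_superset by blast
  then have "span (range d) \<subseteq> (\<Union>n. span (A n))"
    by (rule span_minimal[OF _ subspace_Union_span])
  then have dense: "ptensor_space \<subseteq> closure (\<Union>n. span (A n))"
    using d(2) closure_mono by blast
  have "w = (\<lambda>m. ptensor (fst (ab m)) (snd (ab m)))"
    using ab(1) by (rule ext)
  then have "octahedral_sequence (\<lambda>m. ptensor (fst (ab m)) (snd (ab m))) A"
    using seq(1) by (simp only:)
  then show thesis
    using ab(2,3) seq(4) dense by (rule that[of "\<lambda>m. fst (ab m)" "\<lambda>m. snd (ab m)" A])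
qed

lemma norm_add_bidual_tensor_ge:
  fixes a :: "nat \<Rightarrow> 'a::real_normed_vector" and b :: "nat \<Rightarrow> 'b::real_normed_vector"
  assumes seq: "octahedral_sequence (\<lambda>m. ptensor (a m) (b m)) A"
    and A: "\<And>m. A m \<subseteq> ptensor_space" and a: "\<And>m. norm (a m) \<le> 1"
    and r: "strict_mono r" and b_lim: "(b \<circ> r) \<longlonglongrightarrow> y"
    and u: "\<And>g c. eventually (\<lambda>k. c \<le> blinfun_apply g (a (r k))) sequentially \<Longrightarrow>
                   c \<le> blinfun_apply u g"
    and z: "z \<in> span (A n)"
  shows "norm z + 1 \<le> norm (z + bidual_tensor u y)"
proof (rule field_le_epsilon)
  fix \<epsilon> :: real assume "\<epsilon> > 0"
  define \<delta> where "\<delta> = \<epsilon> / 3"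
  have "\<delta> > 0" using \<open>\<epsilon> > 0\<close> by (simp add: \<delta>_def)
  interpret octahedral_sequence "\<lambda>m. ptensor (a m) (b m)" A by (rule seq)
  obtain G where G: "norm G \<le> 1" "norm z - \<delta> \<le> blinfun_apply G z"
    "eventually (\<lambda>m. 1 - \<delta> \<le> blinfun_apply G (ptensor (a m) (b m))) sequentially"
    using tail_norming_functional[OF z \<open>\<delta> > 0\<close>] by blast
  obtain T where T: "norm T \<le> 1" "\<And>v. v \<in> ptensor_space \<Longrightarrow> blinfun_apply v T = blinfun_apply G v"
    using ptensor_blinfun_representation[OF G(1)] by blast
  have "z \<in> ptensor_space"
    using z span_minimal[OF A subspace_ptensor_space] by blast
  then have z_T: "norm z - \<delta> \<le> blinfun_apply z T"
    using G(2) T(2) by simp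
  have "eventually (\<lambda>k. 1 - \<delta> \<le> blinfun_apply (blinfun_apply T (a (r k))) (b (r k))) sequentially"
    using eventually_compose_filterlim[OF G(3) filterlim_subseq[OF r]]
    by eventually_elim (use T(2)[OF ptensor_mem_ptensor_space] in simp)
  moreover have "eventually (\<lambda>k. norm (b (r k) - y) < \<delta>) sequentially"
    using LIMSEQ_D[OF b_lim \<open>\<delta> > 0\<close>] unfolding eventually_sequentially by simp
  ultimately have "eventually (\<lambda>k. 1 - \<delta> \<le> blinfun_apply (blinfun_apply T (a (r k))) (b (r k))
                      \<and> norm (b (r k) - y) < \<delta>) sequentially"
    by (rule eventually_conj)
  then have "eventually (\<lambda>k. 1 - 2 * \<delta> \<le> blinfun_apply (partial_eval T y) (a (r k))) sequentially"
  proof (rule eventually_mono)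
    fix k
    assume k: "1 - \<delta> \<le> blinfun_apply (blinfun_apply T (a (r k))) (b (r k)) \<and> norm (b (r k) - y) < \<delta>"
    have "norm (blinfun_apply (blinfun_apply T (a (r k))) (b (r k) - y))
            \<le> norm T * norm (a (r k)) * norm (b (r k) - y)"
      by (rule norm_blinfun_apply2_le)
    also have "\<dots> \<le> norm (b (r k) - y)"
      using T(1) a[of "r k"] by (simp add: mult_left_le_one_le mult_le_one)
    finally show "1 - 2 * \<delta> \<le> blinfun_apply (partial_eval T y) (a (r k))"
      using k by (simp add: blinfun.diff_right abs_le_iff)
  qed
  then have "1 - 2 * \<delta> \<le> blinfun_apply (bidual_tensor u y) T"
    using u by simp
  moreover have "blinfun_apply (z + bidual_tensor u y) T \<le> norm (z + bidual_tensor u y)"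
    using norm_blinfun[of "z + bidual_tensor u y" T] T(1)
    by (smt (verit) mult_left_le norm_ge_zero real_norm_def)
  ultimately show "norm z + 1 \<le> norm (z + bidual_tensor u y) + \<epsilon>"
    using z_T by (simp add: blinfun.add_left \<delta>_def)
qed

lemma norm_bidual_emb_add_eq:
  assumes "norm u \<le> 1" "norm y = 1"
    and "norm (ptensor x y + bidual_tensor u y) = 1 + norm (ptensor x y)"
  shows "norm (bidual_emb x + u) = 1 + norm x"
proof (rule antisym)
  show "norm (bidual_emb x + u) \<le> 1 + norm x"
  proof -
    have "norm (bidual_emb x) \<le> norm x"
    proof (rule norm_blinfun_bound)
      fix g
      show "norm (blinfun_apply (bidual_emb x) g) \<le> norm x * norm g"
        using norm_blinfun[of g x] by (simp add: mult.commute)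
    qed simp
    then show ?thesis
      using norm_triangle_ineq[of "bidual_emb x" u] assms(1) by simp
  qed
  have "1 + norm x = norm (ptensor x y + bidual_tensor u y)"
    using assms(2,3) by (simp add: norm_ptensor)
  also have "\<dots> = norm (bidual_tensor (bidual_emb x + u) y)"
    by (simp add: ptensor_eq_bidual_tensor bidual_tensor_add_left)
  also have "\<dots> \<le> norm (bidual_emb x + u)"
    using norm_bidual_tensor_le[of "bidual_emb x + u" y] assms(2) by simp
  finally show "1 + norm x \<le> norm (bidual_emb x + u)" .
qed

lemma bidual_tensor_norm_add_eq:
  fixes u :: "('a::real_normed_vector \<Rightarrow>\<^sub>L real) \<Rightarrow>\<^sub>L real" and y :: "'b::real_normed_vector"
  assumes u: "norm u \<le> 1" and y: "norm y \<le> 1"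
    and lower: "\<And>z. z \<in> (ptensor_space :: ('a, 'b) ptensor_bidual set) \<Longrightarrow>
                 norm z + 1 \<le> norm (z + bidual_tensor u y)"
  shows "norm u = 1 \<and> (\<forall>x. norm (bidual_emb x + u) = 1 + norm x) \<and> norm y = 1 \<and>
         (\<forall>z\<in>(ptensor_space :: ('a, 'b) ptensor_bidual set).
            norm (z + bidual_tensor u y) = 1 + norm z)"
proof -
  have e: "norm (bidual_tensor u y) \<le> norm y"
    using norm_bidual_tensor_le[of u y] mult_left_le_one_le[of "norm y" "norm u"] u by simp
  have Z: "norm (z + bidual_tensor u y) = 1 + norm z" if "z \<in> ptensor_space" for z
    using lower[OF that] norm_triangle_ineq[of z "bidual_tensor u y"] e y by linarith
  have "norm y = 1"
    using lower[OF subspace_0[OF subspace_ptensor_space]] e y by simp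
  then have X: "norm (bidual_emb x + u) = 1 + norm x" for x
    using norm_bidual_emb_add_eq[OF u] Z ptensor_mem_ptensor_space by blast
  have "bidual_emb 0 = (0 :: ('a \<Rightarrow>\<^sub>L real) \<Rightarrow>\<^sub>L real)"
    by (rule blinfun_eqI) (simp add: blinfun.zero_right)
  then have "norm u = 1"
    using X[of 0] by simp
  then show ?thesis
    using X Z \<open>norm y = 1\<close> by blast
qed

theorem mainTheorem3:
  assumes sepX: "separable_space (euclidean :: 'a::banach topology)"
    and sepY: "separable_space (euclidean :: 'b::banach topology)"
    and fdY: "\<exists>B::'b set. finite B \<and> span B = UNIV"
    and oct: "octahedral_on (ptensor_space :: ('a,'b) ptensor_bidual set)"
  shows "\<exists>u :: ('a \<Rightarrow>\<^sub>L real) \<Rightarrow>\<^sub>L real.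
           norm u = 1 \<and>
           (\<forall>x::'a. norm (bidual_emb x + u) = 1 + norm x) \<and>
           (\<exists>y::'b. norm y = 1 \<and>
              (\<forall>z \<in> (ptensor_space :: ('a,'b) ptensor_bidual set).
                  norm (z + bidual_tensor u y) = 1 + norm z))"
proof -
  obtain a :: "nat \<Rightarrow> 'a" and b :: "nat \<Rightarrow> 'b" and A
    where seq: "octahedral_sequence (\<lambda>m. ptensor (a m) (b m)) A"
      "\<And>m. norm (a m) \<le> 1" "\<And>m. norm (b m) \<le> 1" "\<And>m. A m \<subseteq> ptensor_space"
      "ptensor_space \<subseteq> closure (\<Union>n. span (A n))"
    by (rule exists_octahedral_tensor_sequence[OF sepX sepY oct]) (rule that)
  have "compact (cball (0 :: 'b) 1)"
    using fdY compact_span_Int_cball[of _ 1] by force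
  then obtain y r where y: "norm y \<le> 1" "strict_mono r" "(b \<circ> r) \<longlonglongrightarrow> y"
    using seq(3) unfolding compact_eq_seq_compact_metric seq_compact_def by (metis mem_cball_0)
  obtain u :: "('a \<Rightarrow>\<^sub>L real) \<Rightarrow>\<^sub>L real" where u: "norm u \<le> 1"
    "\<And>g c. eventually (\<lambda>k. c \<le> blinfun_apply g (a (r k))) sequentially \<Longrightarrow> c \<le> blinfun_apply u g"
    by (rule exists_functional_above_eventual_bounds[of "\<lambda>k. a (r k)", OF seq(2)]) (rule that)
  have span_A: "norm z + 1 \<le> norm (z + bidual_tensor u y)" if "z \<in> span (A n)" for z n
    using norm_add_bidual_tensor_ge[OF seq(1,4,2) y(2,3) u(2) that] .
  have "norm z + 1 \<le> norm (z + bidual_tensor u y)" if "z \<in> ptensor_space" for z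
    by (rule norm_add_ge_on_closure[where S = "\<Union>n. span (A n)"]) (use span_A seq(5) that in auto)
  then show ?thesis
    using bidual_tensor_norm_add_eq[OF u(1) y(1)] by blast
qed

end
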